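(* Let $\mathcal{A}$ be a finite or countable alphabet, $\mathcal{M}$ a countable set of probability measures on $\mathcal{A}^\infty$, $w:\mathcal{M}\to(0,1]$ a prior with $\sum_\nu w_\nu=1$, $\xi$ the Bayes mixture, $\mu\in\mathcal{M}$, and $\delta\in(0,1]$. Define $\hat d_t$ and $\hat h_t$ (with this $\delta$) as in the context. Then $$\mu(\forall t: d_t\le\hat d_t)\ge 1-\delta\qquad\text{and}\qquad \mu(\forall t: h_t\le\hat h_t)\ge1-\delta.$$
   Context: $\mathcal{A}^\infty$ carries the $\sigma$-algebra generated by cylinders $\Gamma_x=\{x\omega\}$; for a measure $\rho$, $\rho(x):=\rho(\Gamma_x)$, $\rho(y|x):=\rho(xy)/\rho(x)$, and for $\omega\in\mathcal{A}^\infty$, $\rho_{<t}(\omega):=\rho(\omega_{<t})$ with $\omega_{<t}=\omega_1\cdots\omega_{t-1}$. Bayes mixture $\xi(A):=\sum_\nu w_\nu\nu(A)$; posterior $w_\nu(x):=w_\nu\nu(x)/\xi(x)$. Logs natural. For a finite string $x$ and measures $\rho,\xi$: squared Hellinger distance $h_x(\rho,\xi):=\sum_{a\in\mathcal{A}}(\sqrt{\rho(a|x)}-\sqrt{\xi(a|x)})^2$ and KL divergence $d_x(\rho,\xi):=\sum_a\rho(a|x)\ln\frac{\rho(a|x)}{\xi(a|x)}$; random variables $h_t(\rho,\xi)(\omega):=h_{\omega_{<t}}(\rho,\xi)$, $d_t(\rho,\xi)(\omega):=d_{\omega_{<t}}(\rho,\xi)$. Set $d_t:=d_t(\mu,\xi)$,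 $h_t:=h_t(\mu,\xi)$, $c_t(\omega):=\sum_{\nu}w_\nu(\omega_{<t})d_{\omega_{<t}}(\nu,\xi)$. Plausible classes: $\mathcal{M}_t:=\{\nu\in\mathcal{M}:\forall\tau\le t,\ \nu_{<\tau}/\xi_{<\tau}\ge\delta w_\mu/w_\nu\}$ (a random set). Define $\hat d_t:=\frac{c_t}{w_\mu\delta}$ and $\hat h_t:=\sup_{\nu\in\mathcal{M}_t}\left\{\frac{w_\nu}{w_\mu}h_t(\nu,\xi)\right\}$. *)

theory Defs
  imports "HOL-Probability.Probability"
begin

text \<open>Sequences in A^infinity are streams over a countable type 'a; the measurable
space is stream_space (count_space UNIV), generated by cylinders.\<close>

definition cyl :: "'a list \<Rightarrow> 'a stream set" where
  "cyl x = {\<omega>. stake (length x) \<omega> = x}"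

definition pr :: "'a stream measure \<Rightarrow> 'a list \<Rightarrow> real" where
  "pr \<rho> x = measure \<rho> (cyl x)"

definition mix :: "'a stream measure set \<Rightarrow> ('a stream measure \<Rightarrow> real) \<Rightarrow> 'a list \<Rightarrow> real" where
  "mix M w x = (\<Sum>\<^sub>\<infinity>\<nu>\<in>M. w \<nu> * pr \<nu> x)"

definition cond :: "('a list \<Rightarrow> real) \<Rightarrow> 'a \<Rightarrow> 'a list \<Rightarrow> real" where
  "cond f a x = f (x @ [a]) / f x"

definition hell :: "('a list \<Rightarrow> real) \<Rightarrow> ('a list \<Rightarrow> real) \<Rightarrow> 'a list \<Rightarrow> real" where
  "hell f g x = (\<Sum>\<^sub>\<infinity>a\<in>UNIV. (sqrt (cond f a x) - sqrt (cond g a x))^2)"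

definition kl :: "('a list \<Rightarrow> real) \<Rightarrow> ('a list \<Rightarrow> real) \<Rightarrow> 'a list \<Rightarrow> real" where
  "kl f g x = (\<Sum>\<^sub>\<infinity>a\<in>UNIV. cond f a x * ln (cond f a x / cond g a x))"

definition post :: "'a stream measure set \<Rightarrow> ('a stream measure \<Rightarrow> real) \<Rightarrow> 'a stream measure \<Rightarrow> 'a list \<Rightarrow> real" where
  "post M w \<nu> x = w \<nu> * pr \<nu> x / mix M w x"

text \<open>omega_{<t} = omega_1 ... omega_{t-1}  (t \<ge> 1)\<close>
definition pre :: "'a stream \<Rightarrow> nat \<Rightarrow> 'a list" where
  "pre \<omega> t = stake (t - 1) \<omega>"

definition ct :: "'a stream measure set \<Rightarrow> ('a stream measure \<Rightarrow> real) \<Rightarrow> 'a stream \<Rightarrow> nat \<Rightarrow> ennreal" where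
  "ct M w \<omega> t = (\<Sum>\<^sub>\<infinity>\<nu>\<in>M. ennreal (post M w \<nu> (pre \<omega> t) * kl (pr \<nu>) (mix M w) (pre \<omega> t)))"

definition Mt :: "'a stream measure set \<Rightarrow> ('a stream measure \<Rightarrow> real) \<Rightarrow> 'a stream measure \<Rightarrow> real
    \<Rightarrow> 'a stream \<Rightarrow> nat \<Rightarrow> 'a stream measure set" where
  "Mt M w \<mu> \<delta> \<omega> t = {\<nu>\<in>M. \<forall>\<tau>. 1 \<le> \<tau> \<and> \<tau> \<le> t \<longrightarrow>
      pr \<nu> (pre \<omega> \<tau>) / mix M w (pre \<omega> \<tau>) \<ge> \<delta> * w \<mu> / w \<nu>}"

definition dhat :: "'a stream measure set \<Rightarrow> ('a stream measure \<Rightarrow> real) \<Rightarrow> 'a stream measure \<Rightarrow> real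
    \<Rightarrow> 'a stream \<Rightarrow> nat \<Rightarrow> ennreal" where
  "dhat M w \<mu> \<delta> \<omega> t = ct M w \<omega> t / ennreal (w \<mu> * \<delta>)"

text \<open>hat h_t = sup over M_t of (w_nu/w_mu) h_t(nu,xi); sup of the empty set is 0\<close>
definition hhat :: "'a stream measure set \<Rightarrow> ('a stream measure \<Rightarrow> real) \<Rightarrow> 'a stream measure \<Rightarrow> real
    \<Rightarrow> 'a stream \<Rightarrow> nat \<Rightarrow> ennreal" where
  "hhat M w \<mu> \<delta> \<omega> t = (SUP \<nu>\<in>Mt M w \<mu> \<delta> \<omega> t.
      ennreal (w \<nu> / w \<mu> * hell (pr \<nu>) (mix M w) (pre \<omega> t)))"

end

theory Submission
  imports Defs "HOL-Library.Sublist"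
begin

text \<open>Call a prefix \<open>x\<close> bad if \<open>\<mu>(x) / \<xi>(x) < \<delta>\<close>. On a prefix-free family of bad prefixes
  \<open>\<mu>\<close> has total mass at most \<open>\<delta>\<close> times that of \<open>\<xi>\<close>, and \<open>\<xi>\<close> of disjoint cylinders is at most 1;
  so the sequences with some bad prefix have \<open>\<mu>\<close>-probability at most \<open>\<delta>\<close>. Along every other
  sequence the posterior weight of \<open>\<mu>\<close> stays at least \<open>\<delta> w\<^sub>\<mu>\<close>, whence \<open>d\<^sub>t \<le> c\<^sub>t / (\<delta> w\<^sub>\<mu>)\<close>,
  and \<open>\<mu>\<close> itself stays in every plausible class, whence \<open>h\<^sub>t\<close> is at most its supremum over that class.\<close>

lemma has_sum_sum:
  fixes f :: "'i \<Rightarrow> 'b \<Rightarrow> 'c::topological_comm_monoid_add"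
  assumes "finite I" "\<And>i. i \<in> I \<Longrightarrow> (f i has_sum s i) A"
  shows "((\<lambda>x. \<Sum>i\<in>I. f i x) has_sum (\<Sum>i\<in>I. s i)) A"
  using assms
proof (induction I rule: finite_induct)
  case (insert i I)
  then have "(f i has_sum s i) A" "((\<lambda>x. \<Sum>i\<in>I. f i x) has_sum (\<Sum>i\<in>I. s i)) A"
    by simp_all
  then show ?case
    using has_sum_add insert(1,2) by fastforce
qed simp

lemma cyl_in_sets_stream_space:
  "cyl (x :: 'a::countable list) \<in> sets (stream_space (count_space UNIV))"
proof -
  have "cyl x = {\<omega> \<in> space (stream_space (count_space UNIV)). stake (length x) \<omega> = x}"
    by (auto simp: cyl_def space_stream_space)
  also have "\<dots> \<in> sets (stream_space (count_space UNIV))"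
    by measurable
  finally show ?thesis .
qed

lemma sets_Collect_stake_determined:
  assumes "\<And>\<omega> \<omega>'. stake n \<omega> = stake n \<omega>' \<Longrightarrow> P \<omega> = P \<omega>'"
  shows "{\<omega> \<in> space (stream_space (count_space UNIV)). P \<omega>}
           \<in> sets (stream_space (count_space (UNIV :: 'a::countable set)))"
proof -
  have "{\<omega> \<in> space (stream_space (count_space UNIV)). P \<omega>} =
        {\<omega> \<in> space (stream_space (count_space UNIV)). stake n \<omega> \<in> stake n ` Collect P}"
    using assms by blast
  also have "\<dots> \<in> sets (stream_space (count_space (UNIV :: 'a set)))"
    by measurable
  finally show ?thesis .
qed

lemma cyl_antimono:
  assumes "prefix x y"
  shows "cyl y \<subseteq> cyl x"
proof
  fix \<omega> assume "\<omega> \<in> cyl y"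
  then have "take (length x) (stake (length y) \<omega>) = x"
    using assms by (auto simp: cyl_def prefix_def)
  then show "\<omega> \<in> cyl x"
    using prefix_length_le[OF assms] by (simp add: cyl_def take_stake min_absorb1)
qed

lemma cyl_inter_nonempty_imp_prefix:
  assumes "cyl x \<inter> cyl y \<noteq> {}"
  shows "prefix x y \<or> prefix y x"
proof -
  obtain \<omega> where "stake (length x) \<omega> = x" "stake (length y) \<omega> = y"
    using assms by (auto simp: cyl_def)
  then show ?thesis
    by (metis nat_le_linear take_is_prefix take_stake min.absorb1)
qed

definition prefix_minimal :: "'a list set \<Rightarrow> 'a list set" where
  "prefix_minimal F = {x \<in> F. \<forall>y \<in> F. prefix y x \<longrightarrow> y = x}"

lemma prefix_minimal_subset: "prefix_minimal F \<subseteq> F"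
  by (auto simp: prefix_minimal_def)

lemma ex_prefix_minimal_prefix:
  assumes "x \<in> F"
  obtains y where "y \<in> prefix_minimal F" "prefix y x"
proof -
  obtain y where y: "y \<in> F" "prefix y x"
    and shortest: "\<And>z. z \<in> F \<Longrightarrow> prefix z x \<Longrightarrow> length y \<le> length z"
    using ex_has_least_nat[of "\<lambda>y. y \<in> F \<and> prefix y x" x length] assms by blast
  have "y \<in> prefix_minimal F"
    unfolding prefix_minimal_def
  proof (intro CollectI conjI ballI impI)
    fix z assume "z \<in> F" "prefix z y"
    then have "length y \<le> length z"
      using shortest y(2) prefix_order.trans by blast
    then show "z = y"
      using \<open>prefix z y\<close> by (metis prefix_length_prefix prefix_order.antisym prefix_order.refl)
  qed (use y in blast)
  then show thesis
    using that y(2) by blast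
qed

lemma UN_cyl_prefix_minimal: "(\<Union>x\<in>prefix_minimal F. cyl x) = (\<Union>x\<in>F. cyl x)"
proof
  show "(\<Union>x\<in>F. cyl x) \<subseteq> (\<Union>x\<in>prefix_minimal F. cyl x)"
  proof
    fix \<omega> assume "\<omega> \<in> (\<Union>x\<in>F. cyl x)"
    then obtain x where "x \<in> F" "\<omega> \<in> cyl x"
      by blast
    moreover obtain y where "y \<in> prefix_minimal F" "prefix y x"
      using ex_prefix_minimal_prefix[OF \<open>x \<in> F\<close>] by blast
    ultimately show "\<omega> \<in> (\<Union>x\<in>prefix_minimal F. cyl x)"
      using cyl_antimono by blast
  qed
qed (use prefix_minimal_subset in blast)

lemma disjoint_family_on_cyl_prefix_minimal: "disjoint_family_on cyl (prefix_minimal F)"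
  unfolding disjoint_family_on_def prefix_minimal_def
  using cyl_inter_nonempty_imp_prefix by blast

lemma pre_eq_if_stake_eq:
  assumes "stake (t - 1) \<omega> = stake (t - 1) \<omega>'" "\<tau> \<le> t"
  shows "pre \<omega> \<tau> = pre \<omega>' \<tau>"
proof -
  have "take (\<tau> - 1) (stake (t - 1) \<omega>) = take (\<tau> - 1) (stake (t - 1) \<omega>')"
    using assms(1) by simp
  moreover have "\<tau> - 1 \<le> t - 1"
    using assms(2) by simp
  ultimately show ?thesis
    by (simp add: pre_def take_stake min_absorb1)
qed

lemma sets_kl_le_dhat:
  "{\<omega> \<in> space (stream_space (count_space UNIV)). \<forall>t\<ge>1.
      ennreal (kl (pr \<mu>) (mix M w) (pre \<omega> t)) \<le> dhat M w \<mu> \<delta> \<omega> t}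
     \<in> sets (stream_space (count_space (UNIV :: 'a::countable set)))"
proof (rule sets.sets_Collect_countable_All)
  fix t
  show "{\<omega> \<in> space (stream_space (count_space UNIV)). 1 \<le> t \<longrightarrow>
          ennreal (kl (pr \<mu>) (mix M w) (pre \<omega> t)) \<le> dhat M w \<mu> \<delta> \<omega> t}
        \<in> sets (stream_space (count_space (UNIV :: 'a set)))"
    by (rule sets_Collect_stake_determined[where n = "t - 1"]) (simp add: dhat_def ct_def pre_def)
qed

lemma sets_hell_le_hhat:
  "{\<omega> \<in> space (stream_space (count_space UNIV)). \<forall>t\<ge>1.
      ennreal (hell (pr \<mu>) (mix M w) (pre \<omega> t)) \<le> hhat M w \<mu> \<delta> \<omega> t}
     \<in> sets (stream_space (count_space (UNIV :: 'a::countable set)))"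
proof (rule sets.sets_Collect_countable_All)
  fix t
  show "{\<omega> \<in> space (stream_space (count_space UNIV)). 1 \<le> t \<longrightarrow>
          ennreal (hell (pr \<mu>) (mix M w) (pre \<omega> t)) \<le> hhat M w \<mu> \<delta> \<omega> t}
        \<in> sets (stream_space (count_space (UNIV :: 'a set)))"
  proof (rule sets_Collect_stake_determined[where n = "t - 1"])
    fix \<omega> \<omega>' :: "'a stream"
    assume "stake (t - 1) \<omega> = stake (t - 1) \<omega>'"
    then have "pre \<omega> \<tau> = pre \<omega>' \<tau>" if "\<tau> \<le> t" for \<tau>
      using pre_eq_if_stake_eq that by blast
    then have "Mt M w \<mu> \<delta> \<omega> t = Mt M w \<mu> \<delta> \<omega>' t" "pre \<omega> t = pre \<omega>' t"
      by (auto simp: Mt_def)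
    then show "(1 \<le> t \<longrightarrow> ennreal (hell (pr \<mu>) (mix M w) (pre \<omega> t)) \<le> hhat M w \<mu> \<delta> \<omega> t) =
               (1 \<le> t \<longrightarrow> ennreal (hell (pr \<mu>) (mix M w) (pre \<omega>' t)) \<le> hhat M w \<mu> \<delta> \<omega>' t)"
      by (simp add: hhat_def)
  qed
qed

locale bayes_mixture =
  fixes M :: "'a::countable stream measure set"
    and w :: "'a stream measure \<Rightarrow> real"
  assumes prob_space_M: "\<nu> \<in> M \<Longrightarrow> prob_space \<nu>"
    and sets_M: "\<nu> \<in> M \<Longrightarrow> sets \<nu> = sets (stream_space (count_space UNIV))"
    and weight_pos: "\<nu> \<in> M \<Longrightarrow> 0 < w \<nu>"
    and weights_has_sum: "(w has_sum 1) M"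
begin

lemma summable_on_weighted:
  assumes "\<And>\<nu>. \<nu> \<in> M \<Longrightarrow> 0 \<le> f \<nu> \<and> f \<nu> \<le> 1"
  shows "(\<lambda>\<nu>. w \<nu> * f \<nu>) summable_on M"
proof (rule summable_on_comparison_test)
  show "w summable_on M"
    using weights_has_sum by (auto simp: summable_on_def)
  fix \<nu> assume "\<nu> \<in> M"
  then show "w \<nu> * f \<nu> \<le> w \<nu>" "0 \<le> w \<nu> * f \<nu>"
    using assms weight_pos[of \<nu>] by (auto simp: mult_left_le)
qed

lemma infsum_weighted_le_1:
  assumes "\<And>\<nu>. \<nu> \<in> M \<Longrightarrow> 0 \<le> f \<nu> \<and> f \<nu> \<le> 1"
  shows "(\<Sum>\<^sub>\<infinity>\<nu>\<in>M. w \<nu> * f \<nu>) \<le> 1"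
proof -
  have "(\<Sum>\<^sub>\<infinity>\<nu>\<in>M. w \<nu> * f \<nu>) \<le> infsum w M"
  proof (rule infsum_mono)
    show "w summable_on M"
      using weights_has_sum by (auto simp: summable_on_def)
    show "(\<lambda>\<nu>. w \<nu> * f \<nu>) summable_on M"
      using assms by (rule summable_on_weighted)
    fix \<nu> assume "\<nu> \<in> M"
    then show "w \<nu> * f \<nu> \<le> w \<nu>"
      using assms weight_pos[of \<nu>] by (auto simp: mult_left_le)
  qed
  then show ?thesis
    using weights_has_sum by (simp add: has_sum_iff)
qed

lemma pr_bounds: "\<nu> \<in> M \<Longrightarrow> 0 \<le> pr \<nu> x \<and> pr \<nu> x \<le> 1"
  unfolding pr_def using prob_space_M prob_space.prob_le_1 by auto

lemma weighted_pr_nonneg: "\<nu> \<in> M \<Longrightarrow> 0 \<le> w \<nu> * pr \<nu> x"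
  using weight_pos pr_bounds by (meson less_imp_le mult_nonneg_nonneg)

lemma mix_nonneg: "0 \<le> mix M w x"
  unfolding mix_def using weighted_pr_nonneg by (intro infsum_nonneg)

lemma weighted_pr_le_mix:
  assumes "\<nu> \<in> M"
  shows "w \<nu> * pr \<nu> x \<le> mix M w x"
proof -
  have "(\<Sum>\<^sub>\<infinity>\<nu>'\<in>{\<nu>}. w \<nu>' * pr \<nu>' x) \<le> (\<Sum>\<^sub>\<infinity>\<nu>'\<in>M. w \<nu>' * pr \<nu>' x)"
    using assms weighted_pr_nonneg summable_on_weighted[OF pr_bounds]
    by (intro infsum_mono_neutral) auto
  then show ?thesis
    by (simp add: mix_def)
qed

lemma sum_mix_le_1:
  assumes "finite F" "disjoint_family_on cyl F"
  shows "(\<Sum>x\<in>F. mix M w x) \<le> 1"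
proof -
  have "(\<Sum>x\<in>F. w \<nu> * pr \<nu> x) = w \<nu> * measure \<nu> (\<Union>x\<in>F. cyl x)" if "\<nu> \<in> M" for \<nu>
  proof -
    interpret prob_space \<nu>
      using prob_space_M that .
    show ?thesis
      unfolding pr_def sum_distrib_left[symmetric]
      using assms cyl_in_sets_stream_space sets_M[OF that]
      by (subst finite_measure_finite_Union) auto
  qed
  then have "((\<lambda>\<nu>. w \<nu> * measure \<nu> (\<Union>x\<in>F. cyl x)) has_sum (\<Sum>x\<in>F. mix M w x)) M =
             ((\<lambda>\<nu>. \<Sum>x\<in>F. w \<nu> * pr \<nu> x) has_sum (\<Sum>x\<in>F. mix M w x)) M"
    by (intro has_sum_cong) simp
  also have "\<dots>"
    unfolding mix_def using assms(1) summable_on_weighted[OF pr_bounds]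
    by (intro has_sum_sum) auto
  finally have "(\<Sum>x\<in>F. mix M w x) = (\<Sum>\<^sub>\<infinity>\<nu>\<in>M. w \<nu> * measure \<nu> (\<Union>x\<in>F. cyl x))"
    by (rule infsumI[symmetric])
  also have "\<dots> \<le> 1"
    using prob_space_M by (intro infsum_weighted_le_1) (simp add: prob_space.prob_le_1)
  finally show ?thesis .
qed

lemma measure_UN_cyl_le_finite:
  assumes "\<mu> \<in> M" "finite F" "\<And>x. x \<in> F \<Longrightarrow> pr \<mu> x \<le> \<delta> * mix M w x" "0 \<le> \<delta>"
  shows "measure \<mu> (\<Union>x\<in>F. cyl x) \<le> \<delta>"
proof -
  interpret prob_space \<mu>
    using prob_space_M assms(1) .
  let ?F = "prefix_minimal F"
  have fin: "finite ?F"
    using finite_subset[OF prefix_minimal_subset assms(2)] .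
  have "measure \<mu> (\<Union>x\<in>F. cyl x) = measure \<mu> (\<Union>x\<in>?F. cyl x)"
    by (simp only: UN_cyl_prefix_minimal)
  also have "\<dots> = (\<Sum>x\<in>?F. pr \<mu> x)"
    unfolding pr_def
    using fin disjoint_family_on_cyl_prefix_minimal cyl_in_sets_stream_space sets_M[OF assms(1)]
    by (subst finite_measure_finite_Union) auto
  also have "\<dots> \<le> \<delta> * (\<Sum>x\<in>?F. mix M w x)"
    unfolding sum_distrib_left by (intro sum_mono assms(3)) (use prefix_minimal_subset in blast)
  also have "\<dots> \<le> \<delta>"
    by (rule mult_left_le[OF sum_mix_le_1[OF fin disjoint_family_on_cyl_prefix_minimal] assms(4)])
  finally show ?thesis .
qed

lemma measure_UN_cyl_le:
  fixes L :: "'a list set"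
  assumes "\<mu> \<in> M" "\<And>x. x \<in> L \<Longrightarrow> pr \<mu> x \<le> \<delta> * mix M w x" "0 \<le> \<delta>"
  shows "measure \<mu> (\<Union>x\<in>L. cyl x) \<le> \<delta>"
proof -
  interpret prob_space \<mu>
    using prob_space_M assms(1) .
  \<comment> \<open>Exhaust the countable family \<open>L\<close> by finite ones along an enumeration of all strings.\<close>
  define C where "C N = (\<Union>x\<in>{x\<in>L. to_nat x < N}. cyl x)" for N
  have fin: "finite {x\<in>L. to_nat x < N}" for N
    using finite_vimageI[OF finite_lessThan inj_to_nat, of N] by (rule rev_finite_subset) auto
  have "C N \<in> sets \<mu>" for N
    unfolding C_def using fin cyl_in_sets_stream_space sets_M[OF assms(1)] by blast
  moreover have "incseq C"
    unfolding C_def by (intro monoI) auto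
  ultimately have "(\<lambda>N. measure \<mu> (C N)) \<longlonglongrightarrow> measure \<mu> (\<Union>N. C N)"
    by (intro finite_Lim_measure_incseq) auto
  moreover have "measure \<mu> (C N) \<le> \<delta>" for N
    unfolding C_def using assms fin by (intro measure_UN_cyl_le_finite) auto
  moreover have "(\<Union>N. C N) = (\<Union>x\<in>L. cyl x)"
    unfolding C_def by auto
  ultimately show ?thesis
    by (metis LIMSEQ_le_const2)
qed

lemma pr_le_mix_if_ratio_less:
  assumes "\<mu> \<in> M" "pr \<mu> x / mix M w x < \<delta>"
  shows "pr \<mu> x \<le> \<delta> * mix M w x"
proof (cases "mix M w x = 0")
  case True
  then have "w \<mu> * pr \<mu> x \<le> 0"
    using weighted_pr_le_mix[OF assms(1), of x] by simp
  then show ?thesis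
    using True weight_pos[OF assms(1)] by (simp add: mult_le_0_iff)
next
  case False
  then have "0 < mix M w x"
    using mix_nonneg[of x] by linarith
  then show ?thesis
    using assms(2) by (simp add: pos_divide_less_eq mult.commute)
qed

lemma measure_ratio_always_ge:
  assumes "\<mu> \<in> M" "0 \<le> \<delta>"
  shows "1 - \<delta> \<le> measure \<mu> {\<omega> \<in> space \<mu>. \<forall>n. \<delta> \<le> pr \<mu> (stake n \<omega>) / mix M w (stake n \<omega>)}"
proof -
  interpret prob_space \<mu>
    using prob_space_M assms(1) .
  define L where "L = {x. pr \<mu> x / mix M w x < \<delta>}"
  have bad_iff: "\<omega> \<in> (\<Union>x\<in>L. cyl x) \<longleftrightarrow> (\<exists>n. stake n \<omega> \<in> L)" for \<omega>
  proof
    assume "\<omega> \<in> (\<Union>x\<in>L. cyl x)"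
    then obtain x where "x \<in> L" "stake (length x) \<omega> = x"
      by (auto simp: cyl_def)
    then show "\<exists>n. stake n \<omega> \<in> L"
      by (intro exI[of _ "length x"]) simp
  next
    assume "\<exists>n. stake n \<omega> \<in> L"
    then obtain n where "stake n \<omega> \<in> L"
      by blast
    moreover have "\<omega> \<in> cyl (stake n \<omega>)"
      by (simp add: cyl_def)
    ultimately show "\<omega> \<in> (\<Union>x\<in>L. cyl x)"
      by blast
  qed
  have "(\<Union>x\<in>L. cyl x) \<in> sets \<mu>"
    using sets_M[OF assms(1)] cyl_in_sets_stream_space
    by (intro sets.countable_UN') (auto intro: countableI_type)
  moreover have "measure \<mu> (\<Union>x\<in>L. cyl x) \<le> \<delta>"
    by (rule measure_UN_cyl_le[OF assms(1) _ assms(2)]) (simp add: L_def pr_le_mix_if_ratio_less[OF assms(1)])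
  moreover have "{\<omega> \<in> space \<mu>. \<forall>n. \<delta> \<le> pr \<mu> (stake n \<omega>) / mix M w (stake n \<omega>)} =
                 space \<mu> - (\<Union>x\<in>L. cyl x)"
  proof (intro set_eqI)
    fix \<omega>
    show "\<omega> \<in> {\<omega> \<in> space \<mu>. \<forall>n. \<delta> \<le> pr \<mu> (stake n \<omega>) / mix M w (stake n \<omega>)} \<longleftrightarrow>
          \<omega> \<in> space \<mu> - (\<Union>x\<in>L. cyl x)"
      using bad_iff[of \<omega>] unfolding L_def by (auto simp: not_less)
  qed
  ultimately show ?thesis
    using prob_compl by simp
qed

lemma kl_le_dhat:
  assumes "\<mu> \<in> M" "0 < \<delta>" and ratio: "\<delta> \<le> pr \<mu> (pre \<omega> t) / mix M w (pre \<omega> t)"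
  shows "ennreal (kl (pr \<mu>) (mix M w) (pre \<omega> t)) \<le> dhat M w \<mu> \<delta> \<omega> t"
proof -
  define k where "k = kl (pr \<mu>) (mix M w) (pre \<omega> t)"
  define p where "p = post M w \<mu> (pre \<omega> t)"
  have wd: "0 < w \<mu> * \<delta>"
    using weight_pos[OF assms(1)] assms(2) by simp
  have p: "w \<mu> * \<delta> \<le> p"
    using mult_left_mono[OF ratio] weight_pos[OF assms(1)] by (simp add: p_def post_def)
  have "(\<Sum>\<^sub>\<infinity>\<nu>\<in>{\<mu>}. ennreal (post M w \<nu> (pre \<omega> t) * kl (pr \<nu>) (mix M w) (pre \<omega> t)))
        \<le> (\<Sum>\<^sub>\<infinity>\<nu>\<in>M. ennreal (post M w \<nu> (pre \<omega> t) * kl (pr \<nu>) (mix M w) (pre \<omega> t)))"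
    using assms(1) by (intro infsum_mono_neutral) (auto intro: nonneg_summable_on_complete)
  then have ct: "ennreal (p * k) \<le> ct M w \<omega> t"
    by (simp add: ct_def p_def k_def)
  \<comment> \<open>\<open>k\<close> is a real-valued infinite sum with no sign information; \<open>ennreal\<close> truncates negative values to 0.\<close>
  show ?thesis
  proof (cases "k \<le> 0")
    case True
    then show ?thesis
      by (simp add: k_def[symmetric] ennreal_neg)
  next
    case False
    have "k \<le> p * k / (w \<mu> * \<delta>)"
      using False p wd by (simp add: pos_le_divide_eq mult_right_mono mult.commute)
    then have "ennreal k \<le> ennreal (p * k / (w \<mu> * \<delta>))"
      by (rule ennreal_leI)
    also have "\<dots> = ennreal (p * k) / ennreal (w \<mu> * \<delta>)"
      using False p wd by (subst divide_ennreal) auto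
    also have "\<dots> \<le> ct M w \<omega> t / ennreal (w \<mu> * \<delta>)"
      by (rule divide_right_mono_ennreal[OF ct])
    finally show ?thesis
      by (simp add: dhat_def k_def)
  qed
qed

lemma hell_le_hhat:
  assumes "\<mu> \<in> M"
    and "\<And>\<tau>. 1 \<le> \<tau> \<Longrightarrow> \<tau> \<le> t \<Longrightarrow> \<delta> \<le> pr \<mu> (pre \<omega> \<tau>) / mix M w (pre \<omega> \<tau>)"
  shows "ennreal (hell (pr \<mu>) (mix M w) (pre \<omega> t)) \<le> hhat M w \<mu> \<delta> \<omega> t"
proof -
  have "\<mu> \<in> Mt M w \<mu> \<delta> \<omega> t"
    using assms weight_pos[OF assms(1)] by (auto simp: Mt_def)
  then have "ennreal (w \<mu> / w \<mu> * hell (pr \<mu>) (mix M w) (pre \<omega> t)) \<le> hhat M w \<mu> \<delta> \<omega> t"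
    unfolding hhat_def by (rule SUP_upper)
  then show ?thesis
    using weight_pos[OF assms(1)] by simp
qed

end

theorem theorem6:
  fixes M :: "('a::countable) stream measure set"
    and w :: "'a stream measure \<Rightarrow> real"
    and \<mu> :: "'a stream measure"
    and \<delta> :: real
  assumes "countable M"
    and "\<And>\<nu>. \<nu> \<in> M \<Longrightarrow> prob_space \<nu>"
    and "\<And>\<nu>. \<nu> \<in> M \<Longrightarrow> sets \<nu> = sets (stream_space (count_space UNIV))"
    and "\<And>\<nu>. \<nu> \<in> M \<Longrightarrow> 0 < w \<nu> \<and> w \<nu> \<le> 1"
    and "(w has_sum 1) M"
    and "\<mu> \<in> M"
    and "0 < \<delta>" and "\<delta> \<le> 1"
  shows "measure \<mu> {\<omega> \<in> space \<mu>. \<forall>t\<ge>1.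
            ennreal (kl (pr \<mu>) (mix M w) (pre \<omega> t)) \<le> dhat M w \<mu> \<delta> \<omega> t} \<ge> 1 - \<delta>
       \<and> measure \<mu> {\<omega> \<in> space \<mu>. \<forall>t\<ge>1.
            ennreal (hell (pr \<mu>) (mix M w) (pre \<omega> t)) \<le> hhat M w \<mu> \<delta> \<omega> t} \<ge> 1 - \<delta>"
proof -
  interpret bayes_mixture M w
    by (rule bayes_mixture.intro) (simp_all add: assms)
  interpret prob_space \<mu>
    using assms(2,6) .
  have sets_\<mu>: "sets \<mu> = sets (stream_space (count_space UNIV))"
    using assms(3,6) .
  note space_\<mu> = sets_eq_imp_space_eq[OF sets_\<mu>]
  let ?G = "{\<omega> \<in> space \<mu>. \<forall>n. \<delta> \<le> pr \<mu> (stake n \<omega>) / mix M w (stake n \<omega>)}"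
  let ?D = "{\<omega> \<in> space \<mu>. \<forall>t\<ge>1. ennreal (kl (pr \<mu>) (mix M w) (pre \<omega> t)) \<le> dhat M w \<mu> \<delta> \<omega> t}"
  let ?H = "{\<omega> \<in> space \<mu>. \<forall>t\<ge>1. ennreal (hell (pr \<mu>) (mix M w) (pre \<omega> t)) \<le> hhat M w \<mu> \<delta> \<omega> t}"
  have G: "1 - \<delta> \<le> measure \<mu> ?G"
    using assms(6,7) by (intro measure_ratio_always_ge) auto
  have ratio: "\<delta> \<le> pr \<mu> (pre \<omega> t) / mix M w (pre \<omega> t)" if "\<omega> \<in> ?G" for \<omega> t
    using that by (simp add: pre_def)
  have "?G \<subseteq> ?D"
    using ratio kl_le_dhat[OF assms(6,7)] by blast
  moreover have "?D \<in> sets \<mu>"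
    unfolding sets_\<mu> space_\<mu> by (rule sets_kl_le_dhat)
  ultimately have D: "measure \<mu> ?G \<le> measure \<mu> ?D"
    by (rule finite_measure_mono)
  have "?G \<subseteq> ?H"
    using ratio hell_le_hhat[OF assms(6)] by blast
  moreover have "?H \<in> sets \<mu>"
    unfolding sets_\<mu> space_\<mu> by (rule sets_hell_le_hhat)
  ultimately have H: "measure \<mu> ?G \<le> measure \<mu> ?H"
    by (rule finite_measure_mono)
  show ?thesis
    using G D H by linarith
qed

end
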